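(* Let $d_\rho,d_v\ge1$ and let $X$ be a finite set. Let complex arrays $U^{ab}_{ij}$, $R^{yx}_{ab}$, $V^{yx}_{ij}$ and vectors $(e_x)_{x\in X}$, $(u_x)_{x\in X}$ be given (indices $a,b\in\{1,\dots,d_\rho\}$, $i,j\in\{1,\dots,d_v\}$, $x,y\in X$) satisfying, for all indices: (1) $\sum_{z\in X}R^{yz}_{ab}V^{zx}_{ij}=\sum_{z\in X}\sum_{k=1}^{d_v}\sum_{c=1}^{d_\rho}V^{yz}_{ik}R^{zx}_{ac}U^{cb}_{kj}$; (2) $\sum_{y}e_yV^{yx}_{ij}=\delta_{ij}e_x$; (3) $\sum_xR^{yx}_{ab}u_x=\delta_{ab}u_y$; (4) $\sum_xe_xu_x=1$. For $n\ge1$ define $$M_n(a_1,i_1,\dots,a_n,i_n;b_1,j_1,\dots,b_n,j_n)=\sum_{x_0,\dots,x_{2n}\in X}e_{x_0}\prod_{m=1}^{n}\Big(R^{x_{2m-2}x_{2m-1}}_{a_mb_m}V^{x_{2m-1}x_{2m}}_{i_mj_m}\Big)u_{x_{2n}},$$ and define $T_n$ recursively by $T_1(a_1,i_1;b_1,j_1)=U^{a_1b_1}_{i_1j_1}$ and, for $n\ge2$, $$T_n(a_1,i_1,\dots,a_n,i_n;b_1,j_1,\dots,b_n,j_n)=\sum_{c_1,\dots,c_{n-1}}\sum_{k_2,\dots,k_n}T_{n-1}(a_1,i_2,a_2,i_3,\dots,a_{n-1},i_n;c_1,k_2,c_2,k_3,\dots,c_{n-1},k_n)\prod_{m=1}^nU^{c_mb_m}_{k_mj_m},$$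 with the conventions $k_1:=i_1$, $c_n:=a_n$ (sums over $c_m\in\{1,\dots,d_\rho\}$, $k_m\in\{1,\dots,d_v\}$). Then $M_n=T_n$ for every $n\ge1$.
   Context: $T_n$ is the contraction of a triangular brickwork tensor network built from $n(n+1)/2$ copies of the four-index tensor $U$ (a "light cone" of two-site gates with inputs $(b_m,j_m)$ and outputs $(i,a)$), and $M_n$ is a matrix product operator of bond dimension $|X|$ with left boundary vector $e$ and right boundary vector $u$. *)

theory Defs
  imports Complex_Main
begin

text \<open>Index conventions: the bond index set {1..d_rho} is a finite type 'r,
 the physical index set {1..d_v} is a finite type 'v, and X is a finite type 'x.
 Arrays: U a b i j = U^{ab}_{ij}, R y x a b = R^{yx}_{ab}, V y x i j = V^{yx}_{ij}.
 Multi-indices (a_1..a_n), (i_1..i_n), (b_1..b_n), (j_1..j_n) are lists of length n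
 (0-based list positions: a_m = as ! (m-1)).\<close>

definition M ::
  "('x::finite \<Rightarrow> complex) \<Rightarrow> ('x \<Rightarrow> 'x \<Rightarrow> 'r \<Rightarrow> 'r \<Rightarrow> complex) \<Rightarrow>
   ('x \<Rightarrow> 'x \<Rightarrow> 'v \<Rightarrow> 'v \<Rightarrow> complex) \<Rightarrow> ('x \<Rightarrow> complex) \<Rightarrow> nat \<Rightarrow>
   'r list \<Rightarrow> 'v list \<Rightarrow> 'r list \<Rightarrow> 'v list \<Rightarrow> complex" where
  "M e R V u n as is bs js =
     (\<Sum>xs\<in>{xs::'x list. length xs = 2 * n + 1}.
        e (xs ! 0) *
        (\<Prod>m\<in>{1..n}. R (xs ! (2*m - 2)) (xs ! (2*m - 1)) (as ! (m - 1)) (bs ! (m - 1))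
                       * V (xs ! (2*m - 1)) (xs ! (2*m)) (is ! (m - 1)) (js ! (m - 1)))
        * u (xs ! (2 * n)))"

fun T ::
  "('r::finite \<Rightarrow> 'r \<Rightarrow> 'v::finite \<Rightarrow> 'v \<Rightarrow> complex) \<Rightarrow> nat \<Rightarrow>
   'r list \<Rightarrow> 'v list \<Rightarrow> 'r list \<Rightarrow> 'v list \<Rightarrow> complex" where
  "T U 0 as is bs js = 0"
| "T U (Suc 0) as is bs js = U (as ! 0) (bs ! 0) (is ! 0) (js ! 0)"
| "T U (Suc (Suc n)) as is bs js =
     (\<Sum>cs\<in>{cs::'r list. length cs = Suc n}. \<Sum>ks\<in>{ks::'v list. length ks = Suc n}.
        T U (Suc n) (take (Suc n) as) (tl is) cs ks *
        (\<Prod>m<Suc (Suc n). U ((cs @ [as ! Suc n]) ! m) (bs ! m) ((is ! 0 # ks) ! m) (js ! m)))"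

end

theory Submission
  imports Defs
begin

(* Read M_n as the contraction e R[a1,b1] V[i1,j1] ... R[an,bn] V[in,jn] u of a chain of
   X x X matrices. Relation (1) says R[a,b] V[i,j] = sum_{k,c} U^{cb}_{kj} V[i,k] R[a,c]: each R
   can be pulled through the V to its right at the cost of one gate U. Doing this for all n
   pairs leaves e V[i1,k1] (R[a1,c1] V[i2,k2] ... R[a(n-1),c(n-1)] V[in,kn]) R[an,cn] u, weighted
   by one layer of gates, and by (2) and (3) the outer V and R force k1 = i1 and cn = an. What
   remains is M_(n-1) in the shifted indices, so M obeys the recursion defining T, and
   M_0 = e.u = 1 by (4). *)

lemma sum_lists_length_Suc:
  "(\<Sum>xs\<in>{xs::'a::finite list. length xs = Suc n}. f xs)
   = (\<Sum>x\<in>UNIV. \<Sum>xs\<in>{xs. length xs = n}. f (x # xs))"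
proof -
  have "{xs::'a list. length xs = Suc n} = (\<lambda>(x, xs). x # xs) ` (UNIV \<times> {xs. length xs = n})"
    by (auto simp: length_Suc_conv)
  moreover have "inj_on (\<lambda>(x, xs). x # xs) (UNIV \<times> {xs::'a list. length xs = n})"
    by (auto simp: inj_on_def)
  ultimately show ?thesis
    by (simp add: sum.reindex sum.cartesian_product case_prod_unfold)
qed

lemma sum_lists_length_Suc_snoc:
  "(\<Sum>xs\<in>{xs::'a::finite list. length xs = Suc n}. f xs)
   = (\<Sum>x\<in>UNIV. \<Sum>xs\<in>{xs. length xs = n}. f (xs @ [x]))"
proof -
  have "{xs::'a list. length xs = Suc n} = (\<lambda>(x, xs). xs @ [x]) ` (UNIV \<times> {xs. length xs = n})"
    by (auto simp: length_Suc_conv_rev)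
  moreover have "inj_on (\<lambda>(x, xs). xs @ [x]) (UNIV \<times> {xs::'a list. length xs = n})"
    by (auto simp: inj_on_def)
  ultimately show ?thesis
    by (simp add: sum.reindex sum.cartesian_product case_prod_unfold)
qed

lemma sum_if_const_cond: "(\<Sum>x\<in>S. if P then f x else 0) = (if P then \<Sum>x\<in>S. f x else 0)"
  by simp

definition vec_mat_mult :: "('x::finite \<Rightarrow> 'a::comm_semiring_0) \<Rightarrow> ('x \<Rightarrow> 'x \<Rightarrow> 'a) \<Rightarrow> 'x \<Rightarrow> 'a" where
  "vec_mat_mult w A = (\<lambda>x. \<Sum>y\<in>UNIV. w y * A y x)"

definition mat_vec_mult :: "('x::finite \<Rightarrow> 'x \<Rightarrow> 'a::comm_semiring_0) \<Rightarrow> ('x \<Rightarrow> 'a) \<Rightarrow> 'x \<Rightarrow> 'a" where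
  "mat_vec_mult A v = (\<lambda>y. \<Sum>x\<in>UNIV. A y x * v x)"

definition mat_mult :: "('x::finite \<Rightarrow> 'x \<Rightarrow> 'a::comm_semiring_0) \<Rightarrow> ('x \<Rightarrow> 'x \<Rightarrow> 'a) \<Rightarrow> 'x \<Rightarrow> 'x \<Rightarrow> 'a" where
  "mat_mult A B = (\<lambda>y x. \<Sum>z\<in>UNIV. A y z * B z x)"

lemma vec_mat_mult_assoc: "vec_mat_mult (vec_mat_mult w A) B = vec_mat_mult w (mat_mult A B)"
  unfolding vec_mat_mult_def mat_mult_def
  by (simp add: sum_distrib_left sum_distrib_right mult.assoc) (rule ext, rule sum.swap)

lemma vec_mat_mult_sum_right:
  "vec_mat_mult w (\<lambda>y x. \<Sum>k\<in>K. A k y x) = (\<lambda>x. \<Sum>k\<in>K. vec_mat_mult w (A k) x)"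
  unfolding vec_mat_mult_def by (simp add: sum_distrib_left) (rule ext, rule sum.swap)

lemma vec_mat_mult_scale_right:
  "vec_mat_mult w (\<lambda>y x. g * A y x) = (\<lambda>x. g * vec_mat_mult w A x)"
  by (simp add: vec_mat_mult_def sum_distrib_left mult.left_commute)

fun mat_chain :: "('x::finite \<Rightarrow> 'a::comm_semiring_0) \<Rightarrow> ('x \<Rightarrow> 'x \<Rightarrow> 'a) list \<Rightarrow> ('x \<Rightarrow> 'a) \<Rightarrow> 'a" where
  "mat_chain w [] v = (\<Sum>x\<in>UNIV. w x * v x)"
| "mat_chain w (A # As) v = mat_chain (vec_mat_mult w A) As v"

lemma mat_chain_sum_left:
  "mat_chain (\<lambda>x. \<Sum>k\<in>K. f k x) As v = (\<Sum>k\<in>K. mat_chain (f k) As v)"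
proof (induction As arbitrary: f)
  case Nil
  then show ?case by (simp add: sum_distrib_right) (rule sum.swap)
next
  case (Cons A As)
  have "vec_mat_mult (\<lambda>x. \<Sum>k\<in>K. f k x) A = (\<lambda>x. \<Sum>k\<in>K. vec_mat_mult (f k) A x)"
    unfolding vec_mat_mult_def by (simp add: sum_distrib_right) (rule ext, rule sum.swap)
  then show ?case using Cons by simp
qed

lemma mat_chain_scale_left: "mat_chain (\<lambda>x. g * f x) As v = g * mat_chain f As v"
proof (induction As arbitrary: f)
  case Nil
  then show ?case by (simp add: sum_distrib_left mult.assoc)
next
  case (Cons A As)
  have "vec_mat_mult (\<lambda>x. g * f x) A = (\<lambda>x. g * vec_mat_mult f A x)"
    by (simp add: vec_mat_mult_def sum_distrib_left mult.assoc)
  then show ?case using Cons by simp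
qed

lemma mat_chain_zero_left: "mat_chain (\<lambda>x. 0) As v = 0"
  by (induction As) (simp_all add: vec_mat_mult_def)

lemma mat_chain_zero_right: "mat_chain w As (\<lambda>x. 0) = 0"
  by (induction As arbitrary: w) simp_all

lemma mat_chain_snoc: "mat_chain w (As @ [B]) v = mat_chain w As (mat_vec_mult B v)"
  by (induction As arbitrary: w)
    (auto simp: vec_mat_mult_def mat_vec_mult_def sum_distrib_left sum_distrib_right mult_ac intro: sum.swap)

lemma mat_chain_eq_sum_paths:
  "mat_chain w As v = (\<Sum>xs\<in>{xs. length xs = Suc (length As)}.
      w (xs ! 0) * (\<Prod>m<length As. (As ! m) (xs ! m) (xs ! Suc m)) * v (xs ! length As))"
proof (induction As arbitrary: w)
  case Nil
  then show ?case by (simp add: sum_lists_length_Suc)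
next
  case (Cons A As)
  then show ?case
    by (simp add: sum_lists_length_Suc[where n = "Suc (length As)"] prod.lessThan_Suc_shift
        vec_mat_mult_def sum_distrib_left sum_distrib_right mult_ac del: prod.lessThan_Suc)
      (rule sum.swap)
qed

fun rv_word :: "('x \<Rightarrow> 'x \<Rightarrow> 'r \<Rightarrow> 'r \<Rightarrow> 'a) \<Rightarrow> ('x \<Rightarrow> 'x \<Rightarrow> 'v \<Rightarrow> 'v \<Rightarrow> 'a) \<Rightarrow>
    'r list \<Rightarrow> 'v list \<Rightarrow> 'r list \<Rightarrow> 'v list \<Rightarrow> ('x \<Rightarrow> 'x \<Rightarrow> 'a) list" where
  "rv_word R V (a # as) (i # is) (b # bs) (j # js) =
     (\<lambda>y x. R y x a b) # (\<lambda>y x. V y x i j) # rv_word R V as is bs js"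
| "rv_word R V _ _ _ _ = []"

fun vr_word :: "('x \<Rightarrow> 'x \<Rightarrow> 'r \<Rightarrow> 'r \<Rightarrow> 'a) \<Rightarrow> ('x \<Rightarrow> 'x \<Rightarrow> 'v \<Rightarrow> 'v \<Rightarrow> 'a) \<Rightarrow>
    'v list \<Rightarrow> 'v list \<Rightarrow> 'r list \<Rightarrow> 'r list \<Rightarrow> ('x \<Rightarrow> 'x \<Rightarrow> 'a) list" where
  "vr_word R V (i # is) (k # ks) (a # as) (c # cs) =
     (\<lambda>y x. V y x i k) # (\<lambda>y x. R y x a c) # vr_word R V is ks as cs"
| "vr_word R V _ _ _ _ = []"

lemma length_rv_word:
  "length is = length as \<Longrightarrow> length bs = length as \<Longrightarrow> length js = length as \<Longrightarrow>
   length (rv_word R V as is bs js) = 2 * length as"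
  by (induction R V as "is" bs js rule: rv_word.induct) auto

lemma nth_rv_word:
  assumes "length is = length as" "length bs = length as" "length js = length as" "m < length as"
  shows "rv_word R V as is bs js ! (2 * m) = (\<lambda>y x. R y x (as ! m) (bs ! m))"
    and "rv_word R V as is bs js ! Suc (2 * m) = (\<lambda>y x. V y x (is ! m) (js ! m))"
  using assms
  by (induction R V as "is" bs js arbitrary: m rule: rv_word.induct) (auto simp: less_Suc_eq_0_disj)

lemma vr_word_Cons_snoc:
  "length is = length as \<Longrightarrow> length ks = length as \<Longrightarrow> length cs = length as \<Longrightarrow>
   vr_word R V (i # is) (k # ks) (as @ [a]) (cs @ [c]) =
     (\<lambda>y x. V y x i k) # rv_word R V as is cs ks @ [\<lambda>y x. R y x a c]"
  by (induction R V as "is" cs ks arbitrary: i k rule: rv_word.induct) auto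

locale pull_through =
  fixes U :: "'r::finite \<Rightarrow> 'r \<Rightarrow> 'v::finite \<Rightarrow> 'v \<Rightarrow> 'a::comm_semiring_1"
    and R :: "'x::finite \<Rightarrow> 'x \<Rightarrow> 'r \<Rightarrow> 'r \<Rightarrow> 'a"
    and V :: "'x \<Rightarrow> 'x \<Rightarrow> 'v \<Rightarrow> 'v \<Rightarrow> 'a"
  assumes pull_through: "\<And>y x a b i j. (\<Sum>z\<in>UNIV. R y z a b * V z x i j)
                 = (\<Sum>z\<in>UNIV. \<Sum>k\<in>UNIV. \<Sum>c\<in>UNIV. V y z i k * R z x a c * U c b k j)"
begin

lemma mat_mult_pull_through:
  "mat_mult (\<lambda>y x. R y x a b) (\<lambda>y x. V y x i j)
     = (\<lambda>y x. \<Sum>k\<in>UNIV. \<Sum>c\<in>UNIV. U c b k j * mat_mult (\<lambda>y x. V y x i k) (\<lambda>y x. R y x a c) y x)"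
proof (intro ext)
  fix y x
  have "mat_mult (\<lambda>y x. R y x a b) (\<lambda>y x. V y x i j) y x
      = (\<Sum>z\<in>UNIV. \<Sum>k\<in>UNIV. \<Sum>c\<in>UNIV. U c b k j * (V y z i k * R z x a c))"
    by (simp add: mat_mult_def pull_through mult.commute)
  also have "\<dots> = (\<Sum>k\<in>UNIV. \<Sum>c\<in>UNIV. \<Sum>z\<in>UNIV. U c b k j * (V y z i k * R z x a c))"
    by (subst sum.swap, rule sum.cong[OF refl], rule sum.swap)
  finally show "mat_mult (\<lambda>y x. R y x a b) (\<lambda>y x. V y x i j) y x
      = (\<Sum>k\<in>UNIV. \<Sum>c\<in>UNIV. U c b k j * mat_mult (\<lambda>y x. V y x i k) (\<lambda>y x. R y x a c) y x)"
    by (simp add: mat_mult_def sum_distrib_left)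
qed

lemma vec_mat_mult_pull_through:
  "vec_mat_mult (vec_mat_mult w (\<lambda>y x. R y x a b)) (\<lambda>y x. V y x i j)
     = (\<lambda>x. \<Sum>k\<in>UNIV. \<Sum>c\<in>UNIV. U c b k j *
          vec_mat_mult (vec_mat_mult w (\<lambda>y x. V y x i k)) (\<lambda>y x. R y x a c) x)"
  by (simp add: vec_mat_mult_assoc mat_mult_pull_through vec_mat_mult_sum_right vec_mat_mult_scale_right)

lemma mat_chain_rv_word_pull_through:
  assumes "length is = length as" "length bs = length as" "length js = length as"
  shows "mat_chain w (rv_word R V as is bs js) v =
    (\<Sum>cs\<in>{cs. length cs = length as}. \<Sum>ks\<in>{ks. length ks = length as}.
       mat_chain w (vr_word R V is ks as cs) v * (\<Prod>m<length as. U (cs ! m) (bs ! m) (ks ! m) (js ! m)))"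
  using assms
proof (induction as arbitrary: "is" bs js w)
  case Nil
  then show ?case by simp
next
  case (Cons a as)
  then obtain i is' b bs' j js' where lists: "is = i # is'" "bs = b # bs'" "js = j # js'"
    and lengths: "length is' = length as" "length bs' = length as" "length js' = length as"
    by (auto simp: length_Suc_conv)
  let ?W = "\<lambda>k c. vec_mat_mult (vec_mat_mult w (\<lambda>y x. V y x i k)) (\<lambda>y x. R y x a c)"
  let ?P = "\<lambda>cs ks. \<Prod>m<length as. U (cs ! m) (bs' ! m) (ks ! m) (js' ! m)"
  let ?Cs = "{cs. length cs = length as}" and ?Ks = "{ks. length ks = length as}"
  have "mat_chain w (rv_word R V (a # as) is bs js) v
     = (\<Sum>k\<in>UNIV. \<Sum>c\<in>UNIV. U c b k j * mat_chain (?W k c) (rv_word R V as is' bs' js') v)"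
    by (simp add: lists vec_mat_mult_pull_through mat_chain_sum_left mat_chain_scale_left)
  also have "\<dots> = (\<Sum>k\<in>UNIV. \<Sum>c\<in>UNIV. U c b k j *
       (\<Sum>cs\<in>?Cs. \<Sum>ks\<in>?Ks. mat_chain (?W k c) (vr_word R V is' ks as cs) v * ?P cs ks))"
    using Cons.IH[OF lengths] by simp
  also have "\<dots> = (\<Sum>c\<in>UNIV. \<Sum>cs\<in>?Cs. \<Sum>k\<in>UNIV. \<Sum>ks\<in>?Ks.
       mat_chain (?W k c) (vr_word R V is' ks as cs) v * (U c b k j * ?P cs ks))"
    by (simp add: sum_distrib_left mult_ac sum.swap[of _ UNIV ?Cs]) (rule sum.swap)
  also have "\<dots> = (\<Sum>cs\<in>{cs. length cs = length (a # as)}. \<Sum>ks\<in>{ks. length ks = length (a # as)}.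
       mat_chain w (vr_word R V is ks (a # as) cs) v *
       (\<Prod>m<length (a # as). U (cs ! m) (bs ! m) (ks ! m) (js ! m)))"
    by (simp add: sum_lists_length_Suc lists prod.lessThan_Suc_shift del: prod.lessThan_Suc)
  finally show ?case .
qed

lemma mat_chain_rv_word_Suc:
  assumes e_V: "\<And>x i j. (\<Sum>y\<in>UNIV. e y * V y x i j) = (if i = j then e x else 0)"
    and R_u: "\<And>y a b. (\<Sum>x\<in>UNIV. R y x a b * u x) = (if a = b then u y else 0)"
    and lengths: "length as = Suc m" "length is = Suc m" "length bs = Suc m" "length js = Suc m"
  shows "mat_chain e (rv_word R V as is bs js) u =
    (\<Sum>cs\<in>{cs. length cs = m}. \<Sum>ks\<in>{ks. length ks = m}.
       mat_chain e (rv_word R V (take m as) (tl is) cs ks) u *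
       (\<Prod>t<Suc m. U ((cs @ [as ! m]) ! t) (bs ! t) ((is ! 0 # ks) ! t) (js ! t)))"
proof -
  obtain as' a where as_snoc: "as = as' @ [a]" "length as' = m"
    using lengths(1) by (auto simp: length_Suc_conv_rev)
  obtain i is' where is_Cons: "is = i # is'" "length is' = m"
    using lengths(2) by (auto simp: length_Suc_conv)
  let ?P = "\<lambda>cs ks. \<Prod>t<Suc m. U (cs ! t) (bs ! t) (ks ! t) (js ! t)"
  have e_V_collapse: "vec_mat_mult e (\<lambda>y x. V y x i k) = (if k = i then e else (\<lambda>x. 0))" for k
    by (auto simp: vec_mat_mult_def e_V)
  have R_u_collapse: "mat_vec_mult (\<lambda>y x. R y x a c) u = (if c = a then u else (\<lambda>x. 0))" for c
    by (auto simp: mat_vec_mult_def R_u)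
  have boundary_collapse: "mat_chain e (vr_word R V is (k # ks) as (cs @ [c])) u =
      (if c = a then if k = i then mat_chain e (rv_word R V as' is' cs ks) u else 0 else 0)"
    if "length cs = m" "length ks = m" for c cs k ks
    using that by (simp add: as_snoc is_Cons vr_word_Cons_snoc mat_chain_snoc e_V_collapse R_u_collapse
        mat_chain_zero_left mat_chain_zero_right)
  have "mat_chain e (rv_word R V as is bs js) u =
    (\<Sum>cs\<in>{cs. length cs = Suc m}. \<Sum>ks\<in>{ks. length ks = Suc m}.
       mat_chain e (vr_word R V is ks as cs) u * ?P cs ks)"
    using mat_chain_rv_word_pull_through[of "is" as bs js e u] lengths by simp
  also have "\<dots> = (\<Sum>c\<in>UNIV. \<Sum>cs\<in>{cs. length cs = m}. \<Sum>k\<in>UNIV. \<Sum>ks\<in>{ks. length ks = m}.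
       mat_chain e (vr_word R V is (k # ks) as (cs @ [c])) u * ?P (cs @ [c]) (k # ks))"
    by (simp only: sum_lists_length_Suc_snoc[where 'a='r] sum_lists_length_Suc[where 'a='v])
  also have "\<dots> = (\<Sum>c\<in>UNIV. \<Sum>cs\<in>{cs. length cs = m}. \<Sum>k\<in>UNIV. \<Sum>ks\<in>{ks. length ks = m}.
       if c = a then if k = i then mat_chain e (rv_word R V as' is' cs ks) u * ?P (cs @ [c]) (k # ks)
       else 0 else 0)"
    by (intro sum.cong refl) (simp add: boundary_collapse)
  also have "\<dots> = (\<Sum>cs\<in>{cs. length cs = m}. \<Sum>ks\<in>{ks. length ks = m}.
       mat_chain e (rv_word R V as' is' cs ks) u * ?P (cs @ [a]) (i # ks))"
    by (simp add: sum_if_const_cond)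
  finally show ?thesis by (simp add: as_snoc(1) is_Cons flip: as_snoc(2))
qed

end

lemma prod_lessThan_double: "(\<Prod>m<2 * n. f m) = (\<Prod>m<n. f (2 * m) * f (Suc (2 * m)))"
  by (induction n) (simp_all add: mult_ac)

lemma prod_rv_word_path:
  assumes "length is = length as" "length bs = length as" "length js = length as"
  shows "(\<Prod>m<2 * length as. (rv_word R V as is bs js ! m) (xs ! m) (xs ! Suc m)) =
    (\<Prod>m<length as. R (xs ! (2 * m)) (xs ! Suc (2 * m)) (as ! m) (bs ! m)
                     * V (xs ! Suc (2 * m)) (xs ! Suc (Suc (2 * m))) (is ! m) (js ! m))"
  unfolding prod_lessThan_double using assms by (intro prod.cong) (simp_all add: nth_rv_word)

lemma M_eq_mat_chain:
  assumes "length as = n" "length is = n" "length bs = n" "length js = n"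
  shows "M e R V u n as is bs js = mat_chain e (rv_word R V as is bs js) u"
  using assms prod_rv_word_path[of "is" as bs js R V]
  by (simp add: M_def mat_chain_eq_sum_paths length_rv_word prod.atLeast1_atMost_eq[simplified])

lemma M_0: "M e R V u 0 as is bs js = (\<Sum>x\<in>UNIV. e x * u x)"
  by (simp add: M_def sum_lists_length_Suc)

lemma M_Suc:
  fixes U :: "'r::finite \<Rightarrow> 'r \<Rightarrow> 'v::finite \<Rightarrow> 'v \<Rightarrow> complex"
  assumes "pull_through U R V"
    and e_V: "\<And>x i j. (\<Sum>y\<in>UNIV. e y * V y x i j) = (if i = j then e x else 0)"
    and R_u: "\<And>y a b. (\<Sum>x\<in>UNIV. R y x a b * u x) = (if a = b then u y else 0)"
    and lengths: "length as = Suc m" "length is = Suc m" "length bs = Suc m" "length js = Suc m"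
  shows "M e R V u (Suc m) as is bs js =
    (\<Sum>cs\<in>{cs. length cs = m}. \<Sum>ks\<in>{ks. length ks = m}.
       M e R V u m (take m as) (tl is) cs ks *
       (\<Prod>t<Suc m. U ((cs @ [as ! m]) ! t) (bs ! t) ((is ! 0 # ks) ! t) (js ! t)))"
  using pull_through.mat_chain_rv_word_Suc[OF assms] lengths by (simp add: M_eq_mat_chain)

theorem mainTheorem2:
  fixes U :: "'r::finite \<Rightarrow> 'r \<Rightarrow> 'v::finite \<Rightarrow> 'v \<Rightarrow> complex"
    and R :: "'x::finite \<Rightarrow> 'x \<Rightarrow> 'r \<Rightarrow> 'r \<Rightarrow> complex"
    and V :: "'x \<Rightarrow> 'x \<Rightarrow> 'v \<Rightarrow> 'v \<Rightarrow> complex"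
    and e u :: "'x \<Rightarrow> complex"
  assumes h1: "\<And>y x a b i j. (\<Sum>z\<in>UNIV. R y z a b * V z x i j)
                 = (\<Sum>z\<in>UNIV. \<Sum>k\<in>UNIV. \<Sum>c\<in>UNIV. V y z i k * R z x a c * U c b k j)"
    and h2: "\<And>x i j. (\<Sum>y\<in>UNIV. e y * V y x i j) = (if i = j then e x else 0)"
    and h3: "\<And>y a b. (\<Sum>x\<in>UNIV. R y x a b * u x) = (if a = b then u y else 0)"
    and h4: "(\<Sum>x\<in>UNIV. e x * u x) = 1"
    and hn: "n \<ge> 1"
    and hl: "length as = n" "length is = n" "length bs = n" "length js = n"
  shows "M e R V u n as is bs js = T U n as is bs js"
proof -
  have pt: "pull_through U R V"
    using h1 by unfold_locales
  have "M e R V u (Suc m) as is bs js = T U (Suc m) as is bs js"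
    if "length as = Suc m" "length is = Suc m" "length bs = Suc m" "length js = Suc m"
    for m as "is" bs js
    using that
  proof (induction m arbitrary: as "is" bs js)
    case 0
    then show ?case
      by (simp add: M_Suc[OF pt h2 h3 "0.prems"] M_0 h4)
  next
    case (Suc m)
    then show ?case
      by (simp add: M_Suc[OF pt h2 h3 Suc.prems])
  qed
  then show ?thesis
    using hn hl by (cases n) auto
qed

end
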